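(* Let $\psi\in\mathcal W^-$, let $Y$ be a compact topological space, and let $f_k,f$ be continuous functions on $Y$ with $f_k\to f$ uniformly. Let $\mu_k,\mu$ be Borel measures on $Y$ of finite mass with $\mu_k\to\mu$ weakly. Then $\int_Y\psi(cf_k)\,d\mu_k\to\int_Y\psi(cf)\,d\mu$ for every $c\in[0,\infty)$, and $\|f_k\|_{\psi,\mu_k}\to\|f\|_{\psi,\mu}$.
   Context: $\mathcal W^-$: functions $\psi:[-\infty,\infty]\to[0,\infty]$, even, continuous on $\mathbb R$, $\psi(0)=0$, $\psi(\pm\infty)=\infty$, smooth, concave, strictly increasing on $(0,\infty)$. For a finite measure $\nu$ and measurable $g$, $\|g\|_{\psi,\nu}=\inf\{N>0:\int_Y\psi(g/N)\,d\nu\le1\}$. *)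

theory Defs
  imports "HOL-Analysis.Analysis"
begin

definition smooth_on :: "real set \<Rightarrow> (real \<Rightarrow> real) \<Rightarrow> bool" where
  "smooth_on S g \<longleftrightarrow> (\<forall>n. \<forall>x\<in>S. ((deriv ^^ n) g) differentiable (at x))"

text \<open>The class W^-; psi is recorded by its restriction to the reals, with
  psi(+-infinity) = infinity expressed as psi x tending to infinity as x tends to infinity.\<close>
definition W_minus :: "(real \<Rightarrow> real) \<Rightarrow> bool" where
  "W_minus \<psi> \<longleftrightarrow>
     (\<forall>x. 0 \<le> \<psi> x) \<and> (\<forall>x. \<psi> (- x) = \<psi> x) \<and> continuous_on UNIV \<psi> \<and> \<psi> 0 = 0 \<and>
     filterlim \<psi> at_top at_top \<and>
     smooth_on {0<..} \<psi> \<and> concave_on {0<..} \<psi> \<and> strict_mono_on {0<..} \<psi>"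

definition psi_norm :: "(real \<Rightarrow> real) \<Rightarrow> 'a measure \<Rightarrow> ('a \<Rightarrow> real) \<Rightarrow> real" where
  "psi_norm \<psi> \<nu> g = Inf {N::real. 0 < N \<and> (\<integral>\<^sup>+ y. ennreal (\<psi> (g y / N)) \<partial>\<nu>) \<le> 1}"

definition weak_conv_meas :: "(nat \<Rightarrow> 'a::topological_space measure) \<Rightarrow> 'a measure \<Rightarrow> bool" where
  "weak_conv_meas \<mu>s \<mu> \<longleftrightarrow>
     (\<forall>g::'a \<Rightarrow> real. continuous_on UNIV g \<longrightarrow>
        (\<lambda>k. \<integral>y. g y \<partial>(\<mu>s k)) \<longlonglongrightarrow> (\<integral>y. g y \<partial>\<mu>))"

end

theory Submission
  imports Defs
begin

text \<open>Uniform convergence \<open>f\<^sub>k \<rightarrow> f\<close> and the uniform continuity of \<open>\<psi>\<close> on compact intervals give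
  \<open>\<psi>(c f\<^sub>k) \<rightarrow> \<psi>(c f)\<close> uniformly, and integrating a uniformly convergent sequence of continuous
  functions against weakly convergent measures commutes with the limit, because the total masses
  stay bounded.

  For the norms, consider \<open>I(N) = \<integral> \<psi>(f/N) d\<mu>\<close>. It is nonincreasing in \<open>N\<close>, and as \<open>\<psi>\<close> is strictly
  increasing in \<open>|x|\<close> it can be constant on an interval only where it vanishes. Hence \<open>I < 1\<close>
  strictly to the right of the norm of \<open>f\<close>, while \<open>I > 1\<close> to the left of it by definition, and
  the pointwise convergence \<open>I\<^sub>k(N) \<rightarrow> I(N)\<close> traps the norms of the \<open>f\<^sub>k\<close> near the norm of \<open>f\<close>.\<close>

lemma W_minus_abs_eq:
  assumes "W_minus \<psi>"
  shows "\<psi> \<bar>x\<bar> = \<psi> x"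
  using assms unfolding W_minus_def by (cases "0 \<le> x") auto

lemma W_minus_abs_strict_mono:
  assumes W: "W_minus \<psi>" and ab: "\<bar>a\<bar> < \<bar>b\<bar>"
  shows "\<psi> a < \<psi> b"
proof -
  have mono: "strict_mono_on {0<..} \<psi>" and "\<psi> 0 = 0" "0 \<le> \<psi> (\<bar>b\<bar> / 2)"
    using W unfolding W_minus_def by auto
  have "\<psi> \<bar>a\<bar> < \<psi> \<bar>b\<bar>"
  proof (cases "a = 0")
    case True
    have "\<psi> (\<bar>b\<bar> / 2) < \<psi> \<bar>b\<bar>"
      using ab by (intro strict_mono_onD[OF mono]) auto
    with True \<open>\<psi> 0 = 0\<close> \<open>0 \<le> \<psi> (\<bar>b\<bar> / 2)\<close> show ?thesis by simp
  next
    case False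
    with ab show ?thesis by (intro strict_mono_onD[OF mono]) auto
  qed
  then show ?thesis by (simp add: W_minus_abs_eq[OF W])
qed

lemma W_minus_abs_mono:
  assumes "W_minus \<psi>" "\<bar>a\<bar> \<le> \<bar>b\<bar>"
  shows "\<psi> a \<le> \<psi> b"
proof (cases "\<bar>a\<bar> = \<bar>b\<bar>")
  case True
  then show ?thesis using W_minus_abs_eq[OF assms(1), of a] W_minus_abs_eq[OF assms(1), of b] by simp
next
  case False
  with assms show ?thesis using W_minus_abs_strict_mono[of \<psi> a b] by simp
qed

lemma W_minus_scaled_antimono:
  assumes "W_minus \<psi>" "0 < N" "N \<le> N'"
  shows "\<psi> (x / N') \<le> \<psi> (x / N)"
proof -
  have "\<bar>x / N'\<bar> \<le> \<bar>x / N\<bar>"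
    using assms by (auto simp: abs_divide intro!: divide_left_mono)
  then show ?thesis
    by (rule W_minus_abs_mono[OF assms(1)])
qed

context
  fixes \<psi> :: "real \<Rightarrow> real" and M :: "'a measure" and h :: "'a \<Rightarrow> real"
  assumes W: "W_minus \<psi>" and integrable_scaled: "\<And>N. integrable M (\<lambda>y. \<psi> (h y / N))"
begin

lemma psi_norm_eq_Inf_integral:
  "psi_norm \<psi> M h = Inf {N. 0 < N \<and> (\<integral>y. \<psi> (h y / N) \<partial>M) \<le> 1}"
proof -
  have "(\<integral>\<^sup>+y. ennreal (\<psi> (h y / N)) \<partial>M) = ennreal (\<integral>y. \<psi> (h y / N) \<partial>M)" for N
    by (rule nn_integral_eq_integral[OF integrable_scaled]) (use W in \<open>simp add: W_minus_def\<close>)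
  then show ?thesis
    unfolding psi_norm_def by simp
qed

lemma integral_psi_scaled_antimono:
  assumes "0 < N" "N \<le> N'"
  shows "(\<integral>y. \<psi> (h y / N') \<partial>M) \<le> (\<integral>y. \<psi> (h y / N) \<partial>M)"
  using assms by (intro integral_mono[OF integrable_scaled integrable_scaled] W_minus_scaled_antimono[OF W])

lemma integral_psi_scaled_eq_imp_zero:
  assumes "0 < N" "N < N'" and eq: "(\<integral>y. \<psi> (h y / N') \<partial>M) = (\<integral>y. \<psi> (h y / N) \<partial>M)"
  shows "(\<integral>y. \<psi> (h y / N') \<partial>M) = 0"
proof -
  have "(\<integral>y. \<psi> (h y / N) - \<psi> (h y / N') \<partial>M) = 0"
    using eq integrable_scaled by simp
  moreover have "0 \<le> \<psi> (h y / N) - \<psi> (h y / N')" for y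
    using assms by (simp add: W_minus_scaled_antimono[OF W])
  ultimately have "AE y in M. \<psi> (h y / N) - \<psi> (h y / N') = 0"
    using integral_nonneg_eq_0_iff_AE[OF
        Bochner_Integration.integrable_diff[OF integrable_scaled integrable_scaled]]
    by simp
  then have "AE y in M. \<psi> (h y / N') = 0"
  proof eventually_elim
    case (elim y)
    show ?case
    proof (cases "h y = 0")
      case True
      with W show ?thesis by (simp add: W_minus_def)
    next
      case False
      with assms have "\<bar>h y / N'\<bar> < \<bar>h y / N\<bar>"
        by (auto simp: abs_divide intro!: divide_strict_left_mono)
      then have "\<psi> (h y / N') < \<psi> (h y / N)"
        by (rule W_minus_abs_strict_mono[OF W])
      with elim show ?thesis by simp
    qed
  qed
  then show ?thesis
    by (rule integral_eq_zero_AE)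
qed

lemma integral_psi_scaled_tendsto_0: "((\<lambda>N. \<integral>y. \<psi> (h y / N) \<partial>M) \<longlongrightarrow> 0) at_top"
proof -
  have "isCont \<psi> 0" "\<psi> 0 = 0"
    using W by (auto simp: W_minus_def continuous_on_eq_continuous_at)
  have "((\<lambda>N. \<integral>y. \<psi> (h y / N) \<partial>M) \<longlongrightarrow> (\<integral>y. 0 \<partial>M)) at_top"
  proof (rule integral_dominated_convergence_at_top[where w = "\<lambda>y. \<psi> (h y)"])
    show "integrable M (\<lambda>y. \<psi> (h y))"
      using integrable_scaled[of 1] by simp
    show "(\<lambda>y. \<psi> (h y / N)) \<in> borel_measurable M" for N
      using integrable_scaled by blast
    show "AE y in M. ((\<lambda>N. \<psi> (h y / N)) \<longlongrightarrow> 0) at_top"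
    proof (rule AE_I2)
      fix y
      have "((\<lambda>N. h y / N) \<longlongrightarrow> 0) at_top"
        by (intro tendsto_divide_0[OF tendsto_const] filterlim_at_top_imp_at_infinity filterlim_ident)
      from isCont_tendsto_compose[OF \<open>isCont \<psi> 0\<close> this]
      show "((\<lambda>N. \<psi> (h y / N)) \<longlongrightarrow> 0) at_top"
        using \<open>\<psi> 0 = 0\<close> by simp
    qed
    show "\<forall>\<^sub>F N in at_top. AE y in M. norm (\<psi> (h y / N)) \<le> \<psi> (h y)"
      using eventually_ge_at_top[of 1]
    proof eventually_elim
      case (elim N)
      show ?case
      proof (rule AE_I2)
        fix y
        have "\<bar>h y / N\<bar> \<le> \<bar>h y\<bar>"
          using elim by (simp add: abs_divide divide_le_eq mult_le_cancel_left1)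
        then show "norm (\<psi> (h y / N)) \<le> \<psi> (h y)"
          using W_minus_abs_mono[OF W] W by (simp add: W_minus_def)
      qed
    qed
  qed simp
  then show ?thesis by simp
qed

lemma integral_psi_scaled_less_1:
  assumes "psi_norm \<psi> M h < N"
  shows "(\<integral>y. \<psi> (h y / N) \<partial>M) < 1"
proof -
  define I where "I N = (\<integral>y. \<psi> (h y / N) \<partial>M)" for N
  define S where "S = {N. 0 < N \<and> I N \<le> 1}"
  have "eventually (\<lambda>N. 0 < N \<and> I N < 1) at_top"
    using eventually_gt_at_top[of 0] order_tendstoD(2)[OF integral_psi_scaled_tendsto_0, of 1]
    unfolding I_def by (auto intro: eventually_conj)
  then obtain N0 where "N0 \<in> S"
    unfolding S_def eventually_at_top_linorder by (auto intro: less_imp_le)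
  moreover have "bdd_below S"
    by (rule bdd_belowI[of _ 0]) (simp add: S_def)
  moreover have "Inf S < N"
    using assms unfolding psi_norm_eq_Inf_integral S_def I_def .
  ultimately obtain N1 where "N1 \<in> S" "N1 < N"
    using cInf_less_iff[of S N] by blast
  then have "0 < N1" "I N1 \<le> 1"
    unfolding S_def by auto
  have "I N \<le> I N1"
    unfolding I_def using \<open>0 < N1\<close> \<open>N1 < N\<close> by (intro integral_psi_scaled_antimono) auto
  show ?thesis
    unfolding I_def[symmetric]
  proof (rule ccontr)
    assume "\<not> I N < 1"
    with \<open>I N \<le> I N1\<close> \<open>I N1 \<le> 1\<close> have "I N = I N1" by linarith
    then have "I N = 0"
      using integral_psi_scaled_eq_imp_zero[OF \<open>0 < N1\<close> \<open>N1 < N\<close>] unfolding I_def by blast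
    with \<open>\<not> I N < 1\<close> show False by simp
  qed
qed

end

lemma tendsto_Inf_sublevel:
  fixes F :: "nat \<Rightarrow> real \<Rightarrow> real" and G :: "real \<Rightarrow> real"
  assumes lim: "\<And>N. 0 < N \<Longrightarrow> (\<lambda>k. F k N) \<longlonglongrightarrow> G N"
    and F_less: "\<And>k N. Inf {N. 0 < N \<and> F k N \<le> 1} < N \<Longrightarrow> F k N < 1"
    and G_less: "\<And>N. Inf {N. 0 < N \<and> G N \<le> 1} < N \<Longrightarrow> G N < 1"
  shows "(\<lambda>k. Inf {N. 0 < N \<and> F k N \<le> 1}) \<longlonglongrightarrow> Inf {N. 0 < N \<and> G N \<le> 1}"
proof -
  define S where "S H = {N. 0 < N \<and> H N \<le> 1}" for H :: "real \<Rightarrow> real"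
  have Inf_le: "Inf (S H) \<le> N" and Inf_nonneg: "0 \<le> Inf (S H)" if "0 < N" "H N \<le> 1" for H N
  proof -
    have "N \<in> S H" using that by (simp add: S_def)
    moreover have "bdd_below (S H)"
      by (rule bdd_belowI[of _ 0]) (simp add: S_def)
    ultimately show "Inf (S H) \<le> N" "0 \<le> Inf (S H)"
      by (auto intro: cInf_lower cInf_greatest simp: S_def)
  qed
  have "G (\<bar>Inf (S G)\<bar> + 1) < 1"
    by (rule G_less) (simp add: S_def)
  then have "0 \<le> Inf (S G)"
    by (intro Inf_nonneg[of "\<bar>Inf (S G)\<bar> + 1"]) auto
  define n where "n = Inf (S G)"
  with \<open>0 \<le> Inf (S G)\<close> have n_nonneg: "0 \<le> n" by simp
  have F_eventually_le: "eventually (\<lambda>k. F k N \<le> 1) sequentially" if "n < N" for N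
  proof -
    have "G N < 1"
      using G_less that unfolding n_def S_def by blast
    from order_tendstoD(2)[OF lim this] show ?thesis
      using that n_nonneg by (auto elim: eventually_mono)
  qed
  show ?thesis
    unfolding S_def[symmetric] n_def[symmetric]
  proof (rule order_tendstoI)
    fix a assume "n < a"
    then have "n < (n + a) / 2" "(n + a) / 2 < a" by auto
    from F_eventually_le[OF this(1)]
    show "eventually (\<lambda>k. Inf (S (F k)) < a) sequentially"
    proof eventually_elim
      case (elim k)
      have "Inf (S (F k)) \<le> (n + a) / 2"
        by (rule Inf_le) (use elim n_nonneg \<open>n < (n + a) / 2\<close> in auto)
      with \<open>(n + a) / 2 < a\<close> show ?case by linarith
    qed
  next
    fix a assume "a < n"
    define b where "b = (a + n) / 2"
    have "a < b" "b < n" using \<open>a < n\<close> unfolding b_def by auto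
    show "eventually (\<lambda>k. a < Inf (S (F k))) sequentially"
    proof (cases "0 < b")
      case True
      have "\<not> G b \<le> 1"
        using Inf_le[of b G] \<open>b < n\<close> True unfolding n_def by linarith
      then have "1 < G b" by simp
      from order_tendstoD(1)[OF lim[OF True] this]
      show ?thesis
      proof eventually_elim
        case (elim k)
        have "\<not> Inf (S (F k)) < b"
          using F_less[of k b] elim unfolding S_def by linarith
        with \<open>a < b\<close> show ?case by linarith
      qed
    next
      case False
      have "eventually (\<lambda>k. F k (n + 1) \<le> 1) sequentially"
        by (rule F_eventually_le) simp
      then show ?thesis
      proof eventually_elim
        case (elim k)
        have "0 \<le> Inf (S (F k))"
          by (rule Inf_nonneg) (use elim n_nonneg in auto)
        with False \<open>a < b\<close> show ?case by linarith
      qed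
    qed
  qed
qed

lemma tendsto_psi_norm:
  assumes W: "W_minus \<psi>"
    and integrable: "\<And>k N. integrable (\<mu>s k) (\<lambda>y. \<psi> (fs k y / N))"
      "\<And>N. integrable \<mu> (\<lambda>y. \<psi> (f y / N))"
    and lim: "\<And>N. 0 < N \<Longrightarrow> (\<lambda>k. \<integral>y. \<psi> (fs k y / N) \<partial>\<mu>s k) \<longlonglongrightarrow> (\<integral>y. \<psi> (f y / N) \<partial>\<mu>)"
  shows "(\<lambda>k. psi_norm \<psi> (\<mu>s k) (fs k)) \<longlonglongrightarrow> psi_norm \<psi> \<mu> f"
proof -
  note norm_eq =
    psi_norm_eq_Inf_integral[OF W integrable(1)] psi_norm_eq_Inf_integral[OF W integrable(2)]
  show ?thesis
    unfolding norm_eq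
  proof (rule tendsto_Inf_sublevel[OF lim])
    show "(\<integral>y. \<psi> (fs k y / N) \<partial>\<mu>s k) < 1"
      if "Inf {N. 0 < N \<and> (\<integral>y. \<psi> (fs k y / N) \<partial>\<mu>s k) \<le> 1} < N" for k N
      using integral_psi_scaled_less_1[OF W integrable(1)] that unfolding norm_eq .
    show "(\<integral>y. \<psi> (f y / N) \<partial>\<mu>) < 1"
      if "Inf {N. 0 < N \<and> (\<integral>y. \<psi> (f y / N) \<partial>\<mu>) \<le> 1} < N" for N
      using integral_psi_scaled_less_1[OF W integrable(2)] that unfolding norm_eq .
  qed
qed

lemma integrable_continuous_compact_space:
  fixes g :: "'a::topological_space \<Rightarrow> 'b::{banach, second_countable_topology}"
  assumes "compact (UNIV :: 'a set)" "continuous_on UNIV g" "sets M = sets borel" "finite_measure M"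
  shows "integrable M g"
proof -
  have "bounded (range g)"
    by (rule compact_imp_bounded[OF compact_continuous_image[OF assms(2,1)]])
  then obtain B where "\<And>y. norm (g y) \<le> B"
    unfolding bounded_iff by blast
  moreover have "g \<in> borel_measurable M"
    using borel_measurable_continuous_onI[OF assms(2)] measurable_cong_sets[OF assms(3) refl] by blast
  ultimately show ?thesis
    by (intro finite_measure.integrable_const_bound[OF assms(4), of g B]) auto
qed

lemma uniform_limit_compose_continuous:
  fixes \<psi> :: "'b::heine_borel \<Rightarrow> 'c::metric_space"
  assumes cont: "continuous_on UNIV \<psi>" and lim: "uniform_limit X fs f F" and bdd: "bounded (f ` X)"
  shows "uniform_limit X (\<lambda>k y. \<psi> (fs k y)) (\<lambda>y. \<psi> (f y)) F"
proof -
  obtain r a where "f ` X \<subseteq> cball a r"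
    using bdd unfolding bounded_subset_cball by blast
  have "eventually (\<lambda>k. \<forall>y\<in>X. dist (fs k y) (f y) < 1) F"
    using uniform_limitD[OF lim, of 1] by simp
  then have "eventually (\<lambda>k. \<forall>y\<in>X. fs k y \<in> cball a (r + 1)) F"
  proof eventually_elim
    case (elim k)
    show ?case
    proof
      fix y assume "y \<in> X"
      with \<open>f ` X \<subseteq> cball a r\<close> have "dist a (f y) \<le> r" by auto
      moreover have "dist (f y) (fs k y) < 1"
        using elim \<open>y \<in> X\<close> by (simp add: dist_commute)
      ultimately show "fs k y \<in> cball a (r + 1)"
        using dist_triangle[of a "fs k y" "f y"] by simp
    qed
  qed
  moreover have "uniformly_continuous_on (cball a (r + 1)) \<psi>"
    by (rule compact_uniformly_continuous[OF continuous_on_subset[OF cont] compact_cball]) simp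
  ultimately show ?thesis
    by (intro uniform_limit_compose_uniformly_continuous_on[OF lim _ _ closed_cball])
qed

lemma tendsto_integral_weak_conv_uniform_limit:
  fixes gs :: "nat \<Rightarrow> 'a::topological_space \<Rightarrow> real"
  assumes cpt: "compact (UNIV :: 'a set)"
    and cont: "\<And>k. continuous_on UNIV (gs k)" "continuous_on UNIV g"
    and lim: "uniform_limit UNIV gs g sequentially"
    and sets: "\<And>k. sets (\<mu>s k) = sets borel" and fin: "\<And>k. finite_measure (\<mu>s k)"
    and weak: "weak_conv_meas \<mu>s \<mu>"
  shows "(\<lambda>k. \<integral>y. gs k y \<partial>\<mu>s k) \<longlonglongrightarrow> (\<integral>y. g y \<partial>\<mu>)"
proof -
  note weak_conv = weak[unfolded weak_conv_meas_def, rule_format]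
  have weak_g: "(\<lambda>k. \<integral>y. g y \<partial>\<mu>s k) \<longlonglongrightarrow> (\<integral>y. g y \<partial>\<mu>)"
    by (rule weak_conv[OF cont(2)])
  have mass: "(\<lambda>k. measure (\<mu>s k) (space (\<mu>s k))) \<longlonglongrightarrow> measure \<mu> (space \<mu>)"
    using weak_conv[of "\<lambda>_. 1"] by simp
  define m where "m = measure \<mu> (space \<mu>) + 1"
  have "measure \<mu> (space \<mu>) < m" "m > 0"
    unfolding m_def by (simp_all add: add_nonneg_pos)
  from order_tendstoD(2)[OF mass this(1)]
  have mass_bound: "eventually (\<lambda>k. measure (\<mu>s k) (space (\<mu>s k)) < m) sequentially" .
  have "(\<lambda>k. (\<integral>y. gs k y \<partial>\<mu>s k) - (\<integral>y. g y \<partial>\<mu>s k)) \<longlonglongrightarrow> 0"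
  proof (rule tendstoI)
    fix e :: real assume "e > 0"
    with \<open>m > 0\<close> have "eventually (\<lambda>k. \<forall>y. dist (gs k y) (g y) < e / m) sequentially"
      using uniform_limitD[OF lim, of "e / m"] by simp
    with mass_bound
    show "eventually (\<lambda>k. dist ((\<integral>y. gs k y \<partial>\<mu>s k) - (\<integral>y. g y \<partial>\<mu>s k)) 0 < e) sequentially"
    proof eventually_elim
      case (elim k)
      have int: "integrable (\<mu>s k) (gs k)" "integrable (\<mu>s k) g"
        using integrable_continuous_compact_space[OF cpt _ sets fin] cont by auto
      have "\<bar>\<integral>y. gs k y - g y \<partial>\<mu>s k\<bar> \<le> (\<integral>y. \<bar>gs k y - g y\<bar> \<partial>\<mu>s k)"
        using integral_norm_bound[of "\<mu>s k" "\<lambda>y. gs k y - g y"] by simp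
      also have "\<dots> \<le> (\<integral>y. e / m \<partial>\<mu>s k)"
        using elim int by (intro integral_mono) (auto simp: dist_real_def less_imp_le
          intro: finite_measure.integrable_const[OF fin])
      also have "\<dots> = e / m * measure (\<mu>s k) (space (\<mu>s k))"
        by simp
      also have "\<dots> < e / m * m"
        using elim \<open>e > 0\<close> \<open>m > 0\<close> by (intro mult_strict_left_mono) auto
      finally show ?case
        using int \<open>m > 0\<close> by (simp add: dist_real_def)
    qed
  qed
  from tendsto_add[OF this weak_g] show ?thesis
    by simp
qed

lemma tendsto_integral_continuous_comp_weak_conv:
  fixes \<phi> :: "real \<Rightarrow> real" and fs :: "nat \<Rightarrow> 'a::topological_space \<Rightarrow> real"
  assumes \<phi>: "continuous_on UNIV \<phi>" and cpt: "compact (UNIV :: 'a set)"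
    and cont: "\<And>k. continuous_on UNIV (fs k)" "continuous_on UNIV f"
    and lim: "uniform_limit UNIV fs f sequentially"
    and sets: "\<And>k. sets (\<mu>s k) = sets borel" and fin: "\<And>k. finite_measure (\<mu>s k)"
    and weak: "weak_conv_meas \<mu>s \<mu>"
  shows "(\<lambda>k. \<integral>y. \<phi> (fs k y) \<partial>\<mu>s k) \<longlonglongrightarrow> (\<integral>y. \<phi> (f y) \<partial>\<mu>)"
proof (rule tendsto_integral_weak_conv_uniform_limit[OF cpt _ _ _ sets fin weak])
  show "continuous_on UNIV (\<lambda>y. \<phi> (fs k y))" for k
    using continuous_on_compose2[OF \<phi> cont(1)] by simp
  show "continuous_on UNIV (\<lambda>y. \<phi> (f y))"
    using continuous_on_compose2[OF \<phi> cont(2)] by simp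
  have "bounded (range f)"
    by (rule compact_imp_bounded[OF compact_continuous_image[OF cont(2) cpt]])
  then show "uniform_limit UNIV (\<lambda>k y. \<phi> (fs k y)) (\<lambda>y. \<phi> (f y)) sequentially"
    by (rule uniform_limit_compose_continuous[OF \<phi> lim])
qed

theorem lemma2p8:
  fixes \<psi> :: "real \<Rightarrow> real"
    and fs :: "nat \<Rightarrow> 'a::topological_space \<Rightarrow> real" and f :: "'a \<Rightarrow> real"
    and \<mu>s :: "nat \<Rightarrow> 'a measure" and \<mu> :: "'a measure"
  assumes "W_minus \<psi>"
    and "compact (UNIV :: 'a set)"
    and "\<And>k. continuous_on UNIV (fs k)" and "continuous_on UNIV f"
    and "uniform_limit UNIV fs f sequentially"
    and "\<And>k. sets (\<mu>s k) = sets borel" and "\<And>k. finite_measure (\<mu>s k)"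
    and "sets \<mu> = sets borel" and "finite_measure \<mu>"
    and "weak_conv_meas \<mu>s \<mu>"
  shows "(\<forall>c::real. 0 \<le> c \<longrightarrow>
            (\<lambda>k. \<integral>y. \<psi> (c * fs k y) \<partial>(\<mu>s k)) \<longlonglongrightarrow> (\<integral>y. \<psi> (c * f y) \<partial>\<mu>))
       \<and> (\<lambda>k. psi_norm \<psi> (\<mu>s k) (fs k)) \<longlonglongrightarrow> psi_norm \<psi> \<mu> f"
proof -
  have \<psi>_cont: "continuous_on UNIV \<psi>"
    using assms(1) by (simp add: W_minus_def)
  have \<psi>_scaled_cont: "continuous_on UNIV (\<lambda>x. \<psi> (c * x))" for c
    using continuous_on_compose2[OF \<psi>_cont continuous_on_mult_const] by simp
  have integrals: "(\<lambda>k. \<integral>y. \<psi> (c * fs k y) \<partial>\<mu>s k) \<longlonglongrightarrow> (\<integral>y. \<psi> (c * f y) \<partial>\<mu>)" for c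
    by (rule tendsto_integral_continuous_comp_weak_conv[OF \<psi>_scaled_cont assms(2-7,10)])
  have integrable:
    "integrable (\<mu>s k) (\<lambda>y. \<psi> (fs k y / N))" "integrable \<mu> (\<lambda>y. \<psi> (f y / N))" for k N
  proof -
    have cont: "continuous_on UNIV (\<lambda>y. \<psi> (h y / N))" if "continuous_on UNIV h" for h :: "'a \<Rightarrow> real"
      using continuous_on_compose2[OF \<psi>_scaled_cont[of "1 / N"] that] by simp
    show "integrable (\<mu>s k) (\<lambda>y. \<psi> (fs k y / N))"
      by (rule integrable_continuous_compact_space[OF assms(2) cont[OF assms(3)] assms(6,7)])
    show "integrable \<mu> (\<lambda>y. \<psi> (f y / N))"
      by (rule integrable_continuous_compact_space[OF assms(2) cont[OF assms(4)] assms(8,9)])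
  qed
  have "(\<lambda>k. psi_norm \<psi> (\<mu>s k) (fs k)) \<longlonglongrightarrow> psi_norm \<psi> \<mu> f"
  proof (rule tendsto_psi_norm[OF assms(1) integrable])
    show "(\<lambda>k. \<integral>y. \<psi> (fs k y / N) \<partial>\<mu>s k) \<longlonglongrightarrow> (\<integral>y. \<psi> (f y / N) \<partial>\<mu>)" for N
      using integrals[of "1 / N"] by simp
  qed
  with integrals show ?thesis
    by simp
qed

end
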